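(* Let $(p_k)_{k\in\mathbb{Z}}$ with $p_k\in(0,1)$, $q_k=1-p_k$, and let $X=(X_n)_{n\ge0}$ be the nearest-neighbour random walk on $\mathbb{Z}$ started at $X_0=0$ which jumps from $k$ to $k+1$ with probability $p_k$ and from $k$ to $k-1$ with probability $q_k$. Let $\Theta=\inf\{n>0: X_n=0\}$ and, on $\{\Theta<\infty\}$, let $X^\Theta=(X_n:0\le n\le\Theta)$. (i) For every positive excursion $x$, the probability $\mathbb{P}(X^\Theta=x\mid X^\Theta\in\mathcal{X}^+)$ depends only on the level numbers $N(x)$; i.e. if $x,x'\in\mathcal{X}^+$ satisfy $N(x)=N(x')$, then $\mathbb{P}(X^\Theta=x\mid X^\Theta\in\mathcal{X}^+)=\mathbb{P}(X^\Theta=x'\mid X^\Theta\in\mathcal{X}^+)$. (ii) Conversely, assume that there is no finite nonempty set $K\subset\{1,2,\dots\}$ and integers $a_h\in\mathbb{Z}\setminus\{0\}$, $h\in K$, with $\sum_{h\in K}a_h\log(p_hq_{h+1})=0$. Then for $x,x'\in\mathcal{X}^+$, $\mathbb{P}(X^\Theta=x\mid X^\Theta\in\mathcal{X}^+)=\mathbb{P}(X^\Theta=x'\mid X^\Theta\in\mathcal{X}^+)$ implies $N(x)=N(x')$.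
   Context: A positive excursion is a finite sequence $x=(x_n:0\le n\le\theta)$ of integers with $x_0=x_\theta=0$, $x_n>0$ for $0<n<\theta$, and jumps $y_n=x_{n+1}-x_n\in\{1,-1\}$ for $0\le n<\theta$; $\theta=\theta(x)$ is its length. $\mathcal{X}^+$ denotes the set of all positive excursions. For $x\in\mathcal{X}^+$, its level numbers are the sequence $N(x)=(N_h(x):h\ge0)$, where $N_h(x)=|\{n\in[0,\theta):y_n=1,\ x_n=h\}|$ (the number of up-steps starting from level $h$, i.e. the number of "individuals born at level $h$"). The event $\{X^\Theta\in\mathcal{X}^+\}$ is the event that $\Theta<\infty$ and $X_1=1$; it has positive probability. *)

theory Defs
  imports "HOL-Analysis.Analysis"
begin

text \<open>A finite integer path is a list xs = [x_0, ..., x_theta], theta = length xs - 1.\<close>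

definition pos_exc :: "int list \<Rightarrow> bool" where
  "pos_exc xs \<longleftrightarrow> length xs \<ge> 2 \<and> xs ! 0 = 0 \<and> last xs = 0
     \<and> (\<forall>n. 0 < n \<and> n < length xs - 1 \<longrightarrow> xs ! n > 0)
     \<and> (\<forall>n < length xs - 1. xs ! (Suc n) - xs ! n = 1 \<or> xs ! (Suc n) - xs ! n = -1)"

definition level_num :: "int list \<Rightarrow> nat \<Rightarrow> nat" where
  "level_num xs h = card {n. n < length xs - 1 \<and> xs ! (Suc n) - xs ! n = 1 \<and> xs ! n = int h}"

definition level_nums :: "int list \<Rightarrow> (nat \<Rightarrow> nat)" where
  "level_nums xs = (\<lambda>h. level_num xs h)"

text \<open>For a positive excursion xs this equals P(X^Theta = xs).\<close>
definition path_prob :: "(int \<Rightarrow> real) \<Rightarrow> int list \<Rightarrow> real" where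
  "path_prob p xs = (\<Prod>n < length xs - 1.
      if xs ! (Suc n) - xs ! n = 1 then p (xs ! n) else 1 - p (xs ! n))"

text \<open>P(X^Theta = x | X^Theta in X^+); the event {X^Theta in X^+} is the countable
  disjoint union of the events {X^Theta = y}, y a positive excursion.\<close>
definition cond_exc_prob :: "(int \<Rightarrow> real) \<Rightarrow> int list \<Rightarrow> real" where
  "cond_exc_prob p xs = path_prob p xs / infsum (path_prob p) {ys. pos_exc ys}"

end

theory Submission
  imports Defs
begin

text \<open>
  Along a nearest-neighbour path the up- and down-crossings of an edge {h, h+1} alternate, so
  a path that ends where it started crosses every edge equally often in both directions.
  Hence the probability of a positive excursion x is the product of the factors p h * q (h+1)
  raised to the powers N h x, and it depends only on the level numbers. The positive
  excursions form a prefix-free set of nearest-neighbour paths, so their probabilities sum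
  to at most 1; conditioning on the excursion being positive therefore divides by a positive
  constant. Conversely, equal probabilities give a vanishing integer combination of the
  logarithms ln (p h * q (h+1)) with coefficients N h x - N h x'; the coefficient at h = 0
  vanishes because every positive excursion leaves 0 exactly once, and the independence
  hypothesis kills the others.
\<close>

definition count_steps :: "(int \<Rightarrow> int \<Rightarrow> bool) \<Rightarrow> int list \<Rightarrow> nat" where
  "count_steps P xs = length (filter (\<lambda>(a, b). P a b) (zip xs (tl xs)))"

lemma count_steps_conv_card:
  "count_steps P xs = card {n. n < length xs - 1 \<and> P (xs ! n) (xs ! Suc n)}"
  unfolding count_steps_def length_filter_conv_card
  by (auto simp: nth_tl intro!: arg_cong[where f = card])

definition ups :: "int \<Rightarrow> int list \<Rightarrow> nat" where
  "ups h = count_steps (\<lambda>a b. a = h \<and> b - a = 1)"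

text \<open>
  Counting all steps from h that are not up-steps (rather than the steps to h - 1) makes
  the product formula for path_prob below hold for arbitrary lists.
\<close>
definition downs :: "int \<Rightarrow> int list \<Rightarrow> nat" where
  "downs h = count_steps (\<lambda>a b. a = h \<and> b - a \<noteq> 1)"

lemma ups_short [simp]: "ups h [] = 0" "ups h [a] = 0"
  and downs_short [simp]: "downs h [] = 0" "downs h [a] = 0"
  by (simp_all add: ups_def downs_def count_steps_def)

lemma ups_Cons_Cons [simp]: "ups h (a # b # xs) = of_bool (a = h \<and> b - a = 1) + ups h (b # xs)"
  by (simp add: ups_def count_steps_def)

lemma downs_Cons_Cons [simp]:
  "downs h (a # b # xs) = of_bool (a = h \<and> b - a \<noteq> 1) + downs h (b # xs)"
  by (simp add: downs_def count_steps_def)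

lemma level_num_eq_ups: "level_num xs h = ups (int h) xs"
  by (simp add: level_num_def ups_def count_steps_conv_card conj_commute)

fun unit_steps :: "int list \<Rightarrow> bool" where
  "unit_steps (a # b # xs) \<longleftrightarrow> \<bar>b - a\<bar> = 1 \<and> unit_steps (b # xs)"
| "unit_steps _ \<longleftrightarrow> True"

lemma unit_steps_iff_nth:
  "unit_steps xs \<longleftrightarrow> (\<forall>n < length xs - 1. \<bar>xs ! Suc n - xs ! n\<bar> = 1)"
  by (induction xs rule: induct_list012) (auto simp: All_less_Suc2)

lemma path_prob_Nil [simp]: "path_prob p [] = 1"
  and path_prob_singleton [simp]: "path_prob p [a] = 1"
  by (simp_all add: path_prob_def)

lemma path_prob_Cons_Cons:
  "path_prob p (a # b # xs) = (if b - a = 1 then p a else 1 - p a) * path_prob p (b # xs)"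
  unfolding path_prob_def by (simp del: prod.lessThan_Suc add: prod.lessThan_Suc_shift)
    (auto intro!: prod.cong)

lemma path_prob_nonneg: "\<forall>k. 0 \<le> p k \<and> p k \<le> 1 \<Longrightarrow> 0 \<le> path_prob p xs"
  unfolding path_prob_def by (rule prod_nonneg) auto

lemma path_prob_eq_prod_ups_downs:
  assumes "finite S" "set xs \<subseteq> S"
  shows "path_prob p xs = (\<Prod>h\<in>S. p h ^ ups h xs * (1 - p h) ^ downs h xs)"
  using assms(2)
proof (induction xs rule: induct_list012)
  case (3 a b xs)
  have "(\<Prod>h\<in>S. p h ^ ups h (a # b # xs) * (1 - p h) ^ downs h (a # b # xs))
      = (\<Prod>h\<in>S. (if h = a then (if b - a = 1 then p a else 1 - p a) else 1)
          * (p h ^ ups h (b # xs) * (1 - p h) ^ downs h (b # xs)))"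
    by (rule prod.cong) (auto simp: power_add)
  also have "\<dots> = (if b - a = 1 then p a else 1 - p a) * path_prob p (b # xs)"
    using 3 assms(1) by (simp add: prod.distrib prod.delta)
  finally show ?case by (simp add: path_prob_Cons_Cons)
qed simp_all

lemma ups_minus_downs:
  assumes "unit_steps xs" "xs \<noteq> []"
  shows "int (ups h xs) - int (downs (h + 1) xs)
    = of_bool (hd xs \<le> h \<and> h < last xs) - of_bool (last xs \<le> h \<and> h < hd xs)"
  using assms
proof (induction xs rule: induct_list012)
  case (3 a b xs)
  define L where "L = last (b # xs)"
  have IH: "int (ups h (b # xs)) - int (downs (h + 1) (b # xs))
      = of_bool (b \<le> h \<and> h < L) - of_bool (L \<le> h \<and> h < b)"
    using 3 unfolding L_def by (metis list.sel(1) list.simps(3) unit_steps.simps(1))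
  have "int (ups h (a # b # xs)) - int (downs (h + 1) (a # b # xs))
      = of_bool (a = h \<and> b - a = 1) - of_bool (a = h + 1 \<and> b - a \<noteq> 1)
        + (of_bool (b \<le> h \<and> h < L) - of_bool (L \<le> h \<and> h < b))"
    by (simp flip: IH)
  also have "\<dots> = of_bool (a \<le> h \<and> h < L) - of_bool (L \<le> h \<and> h < a)"
    using "3.prems"(1) by (auto simp: abs_eq_iff)
  finally show ?case by (simp add: L_def)
qed simp_all

lemma downs_succ_eq_ups:
  assumes "unit_steps xs" "hd xs = last xs"
  shows "downs (h + 1) xs = ups h xs"
proof (cases "xs = []")
  case False
  then show ?thesis using assms ups_minus_downs[of xs h] by simp
qed simp

lemma ups_eq_0: "h \<notin> set xs \<Longrightarrow> ups h xs = 0"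
  by (induction xs rule: induct_list012) auto

lemma downs_eq_0: "unit_steps xs \<Longrightarrow> h - 1 \<notin> set xs \<Longrightarrow> downs h xs = 0"
  by (induction xs rule: induct_list012) (auto simp: abs_eq_iff)

lemma pos_excD:
  assumes "pos_exc xs"
  shows "xs \<noteq> []" "hd xs = 0" "last xs = 0" "unit_steps xs" "\<forall>y\<in>set xs. 0 \<le> y"
proof -
  show ne: "xs \<noteq> []" using assms unfolding pos_exc_def by auto
  show "hd xs = 0" using assms ne unfolding pos_exc_def by (simp add: hd_conv_nth)
  show "last xs = 0" using assms unfolding pos_exc_def by simp
  show "unit_steps xs"
    unfolding unit_steps_iff_nth
  proof (intro allI impI)
    fix n assume "n < length xs - 1"
    then have "xs ! Suc n - xs ! n = 1 \<or> xs ! Suc n - xs ! n = -1"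
      using assms unfolding pos_exc_def by blast
    then show "\<bar>xs ! Suc n - xs ! n\<bar> = 1" by auto
  qed
  show "\<forall>y\<in>set xs. 0 \<le> y"
  proof
    fix y assume "y \<in> set xs"
    then obtain n where n: "n < length xs" "xs ! n = y" by (auto simp: in_set_conv_nth)
    consider "n = 0" | "n = length xs - 1" | "0 < n \<and> n < length xs - 1" using n(1) by linarith
    then show "0 \<le> y"
    proof cases
      case 1 then show ?thesis using n \<open>hd xs = 0\<close> ne by (simp add: hd_conv_nth)
    next
      case 2 then show ?thesis using n \<open>last xs = 0\<close> ne by (simp add: last_conv_nth)
    next
      case 3 then show ?thesis using n assms unfolding pos_exc_def by force
    qed
  qed
qed

lemma path_prob_pos_exc:
  assumes "pos_exc xs" "\<forall>y\<in>set xs. y < int M"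
  shows "path_prob p xs = (\<Prod>h<M. (p (int h) * (1 - p (int h + 1))) ^ level_num xs h)"
proof -
  let ?u = "\<lambda>h. ups (int h) xs" and ?d = "\<lambda>h. downs (int h) xs"
  have "set xs \<subseteq> int ` {..<Suc M}"
  proof
    fix y assume "y \<in> set xs"
    with assms pos_excD(5)[OF assms(1)] have "y = int (nat y)" "nat y < Suc M" by auto
    then show "y \<in> int ` {..<Suc M}" by blast
  qed
  then have "path_prob p xs = (\<Prod>h\<in>int ` {..<Suc M}. p h ^ ups h xs * (1 - p h) ^ downs h xs)"
    by (simp add: path_prob_eq_prod_ups_downs)
  also have "\<dots> = (\<Prod>h<Suc M. p (int h) ^ ?u h) * (\<Prod>h<Suc M. (1 - p (int h)) ^ ?d h)"
    by (simp add: prod.reindex prod.distrib)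
  also have "(\<Prod>h<Suc M. p (int h) ^ ?u h) = (\<Prod>h<M. p (int h) ^ ?u h)"
    using assms(2) ups_eq_0[of "int M" xs] by auto
  also have "(\<Prod>h<Suc M. (1 - p (int h)) ^ ?d h) = (\<Prod>h<M. (1 - p (int h + 1)) ^ ?u h)"
  proof -
    have "-1 \<notin> set xs" using pos_excD(5)[OF assms(1)] by force
    then have "?d 0 = 0" using downs_eq_0[of xs 0] pos_excD(4)[OF assms(1)] by simp
    moreover have "?d (Suc h) = ?u h" for h
      using downs_succ_eq_ups[of xs "int h"] pos_excD[OF assms(1)] by (simp add: add.commute)
    ultimately show ?thesis by (simp add: prod.lessThan_Suc_shift ac_simps del: prod.lessThan_Suc)
  qed
  finally show ?thesis
    by (simp add: level_num_eq_ups power_mult_distrib prod.distrib)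
qed

definition prefix_free :: "'a list set \<Rightarrow> bool" where
  "prefix_free F \<longleftrightarrow> (\<forall>xs\<in>F. \<forall>zs. xs @ zs \<in> F \<longrightarrow> zs = [])"

definition step_branch :: "int list set \<Rightarrow> int \<Rightarrow> int \<Rightarrow> int list set" where
  "step_branch F a b = {ys. a # ys \<in> F \<and> ys \<noteq> [] \<and> hd ys = b}"

lemma prefix_free_step_branch: "prefix_free F \<Longrightarrow> prefix_free (step_branch F a b)"
  unfolding prefix_free_def step_branch_def by (metis append_Cons mem_Collect_eq)

lemma finite_step_branch: "finite F \<Longrightarrow> finite (step_branch F a b)"
proof (rule finite_subset)
  show "step_branch F a b \<subseteq> tl ` F" unfolding step_branch_def by force
qed simp

lemma sum_path_prob_Cons_image:
  assumes "\<forall>ys\<in>B. ys \<noteq> [] \<and> hd ys = b"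
  shows "sum (path_prob p) ((#) a ` B) = (if b - a = 1 then p a else 1 - p a) * sum (path_prob p) B"
proof -
  have "path_prob p (a # ys) = (if b - a = 1 then p a else 1 - p a) * path_prob p ys" if "ys \<in> B" for ys
  proof -
    have "ys = b # tl ys" using assms that by (metis list.collapse)
    then show ?thesis by (metis path_prob_Cons_Cons)
  qed
  then show ?thesis by (simp add: sum.reindex sum_distrib_left)
qed

lemma prefix_free_eq_singleton:
  assumes "prefix_free F" "[a] \<in> F" "\<forall>xs\<in>F. xs \<noteq> [] \<and> hd xs = a"
  shows "F = {[a]}"
proof -
  have "xs = [a]" if "xs \<in> F" for xs
  proof -
    from assms(3) that have xs: "xs = [a] @ tl xs" by (metis append_Cons append_Nil list.collapse)
    with assms(1,2) that have "tl xs = []" unfolding prefix_free_def by metis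
    with xs show ?thesis by simp
  qed
  with assms(2) show ?thesis by blast
qed

lemma sum_path_prob_first_step:
  assumes "finite F" "[a] \<notin> F" and paths: "\<forall>xs\<in>F. xs \<noteq> [] \<and> hd xs = a \<and> unit_steps xs"
  shows "sum (path_prob p) F = p a * sum (path_prob p) (step_branch F a (a + 1))
    + (1 - p a) * sum (path_prob p) (step_branch F a (a - 1))"
proof -
  let ?up = "step_branch F a (a + 1)" and ?down = "step_branch F a (a - 1)"
  have "F \<subseteq> (#) a ` ?up \<union> (#) a ` ?down"
  proof
    fix xs assume "xs \<in> F"
    with paths obtain ys where xs: "xs = a # ys" by (metis list.collapse)
    with assms(2) \<open>xs \<in> F\<close> obtain b zs where ys: "ys = b # zs" by (cases ys) auto
    from paths \<open>xs \<in> F\<close> have "unit_steps xs" by blast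
    with xs ys have "b = a + 1 \<or> b = a - 1" by auto
    with \<open>xs \<in> F\<close> xs ys have "ys \<in> ?up \<or> ys \<in> ?down" unfolding step_branch_def by auto
    with xs show "xs \<in> (#) a ` ?up \<union> (#) a ` ?down" by blast
  qed
  moreover have "(#) a ` ?up \<union> (#) a ` ?down \<subseteq> F" unfolding step_branch_def by auto
  ultimately have "F = (#) a ` ?up \<union> (#) a ` ?down" by blast
  then have "sum (path_prob p) F = sum (path_prob p) ((#) a ` ?up \<union> (#) a ` ?down)"
    by (rule arg_cong)
  also have "\<dots> = sum (path_prob p) ((#) a ` ?up) + sum (path_prob p) ((#) a ` ?down)"
    by (intro sum.union_disjoint finite_imageI finite_step_branch assms(1))
      (auto simp: step_branch_def)
  also have "\<dots> = p a * sum (path_prob p) ?up + (1 - p a) * sum (path_prob p) ?down"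
    using sum_path_prob_Cons_image[of ?up "a + 1" p a] sum_path_prob_Cons_image[of ?down "a - 1" p a]
    by (simp add: step_branch_def)
  finally show ?thesis .
qed

lemma sum_path_prob_prefix_free_le_1:
  assumes "\<forall>k. 0 \<le> p k \<and> p k \<le> 1"
  shows "finite F \<Longrightarrow> prefix_free F
    \<Longrightarrow> \<forall>xs\<in>F. xs \<noteq> [] \<and> hd xs = a \<and> unit_steps xs \<and> length xs \<le> n
    \<Longrightarrow> sum (path_prob p) F \<le> 1"
proof (induction n arbitrary: F a)
  case 0
  then have "F = {}" by auto
  then show ?case by simp
next
  case (Suc n)
  show ?case
  proof (cases "[a] \<in> F")
    case True
    with Suc.prems have "F = {[a]}" by (simp add: prefix_free_eq_singleton)
    then show ?thesis by simp
  next
    case False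
    with Suc.prems have split: "sum (path_prob p) F
        = p a * sum (path_prob p) (step_branch F a (a + 1))
          + (1 - p a) * sum (path_prob p) (step_branch F a (a - 1))"
      by (simp add: sum_path_prob_first_step)
    have branch_le_1: "sum (path_prob p) (step_branch F a b) \<le> 1" for b
    proof (rule Suc.IH)
      show "finite (step_branch F a b)" using Suc.prems(1) by (rule finite_step_branch)
      show "prefix_free (step_branch F a b)" using Suc.prems(2) by (rule prefix_free_step_branch)
      show "\<forall>ys\<in>step_branch F a b. ys \<noteq> [] \<and> hd ys = b \<and> unit_steps ys \<and> length ys \<le> n"
      proof
        fix ys assume "ys \<in> step_branch F a b"
        then have "a # ys \<in> F" "ys \<noteq> []" "hd ys = b" by (simp_all add: step_branch_def)
        moreover from Suc.prems(3) \<open>a # ys \<in> F\<close>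
        have "unit_steps (a # ys)" "length (a # ys) \<le> Suc n" by blast+
        ultimately show "ys \<noteq> [] \<and> hd ys = b \<and> unit_steps ys \<and> length ys \<le> n"
          by (cases ys) simp_all
      qed
    qed
    have "p a * sum (path_prob p) (step_branch F a (a + 1)) \<le> p a"
      using branch_le_1 assms by (simp add: mult_left_le)
    moreover have "(1 - p a) * sum (path_prob p) (step_branch F a (a - 1)) \<le> 1 - p a"
      using branch_le_1 assms by (simp add: mult_left_le)
    ultimately show ?thesis using split by linarith
  qed
qed

lemma prefix_free_pos_exc: "prefix_free {xs. pos_exc xs}"
  unfolding prefix_free_def
proof (intro ballI allI impI)
  fix xs zs assume "xs \<in> {xs. pos_exc xs}" "xs @ zs \<in> {xs. pos_exc xs}"
  then have exc: "pos_exc xs" "pos_exc (xs @ zs)" by simp_all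
  let ?k = "length xs - 1"
  have "(xs @ zs) ! ?k = 0"
    using pos_excD(1,3)[OF exc(1)] by (simp add: nth_append last_conv_nth)
  moreover have k_pos: "0 < ?k" using exc(1) unfolding pos_exc_def by simp
  ultimately have "\<not> ?k < length (xs @ zs) - 1"
    using exc(2) unfolding pos_exc_def by (metis less_irrefl)
  then show "zs = []" using k_pos by (cases zs) auto
qed

lemma summable_on_path_prob_pos_exc:
  assumes "\<forall>k. 0 \<le> p k \<and> p k \<le> 1"
  shows "path_prob p summable_on {xs. pos_exc xs}"
proof (rule nonneg_bdd_above_summable_on)
  show "0 \<le> path_prob p xs" for xs using assms by (rule path_prob_nonneg)
  have "sum (path_prob p) F \<le> 1" if "finite F" "F \<subseteq> {xs. pos_exc xs}" for F
  proof (rule sum_path_prob_prefix_free_le_1[OF assms \<open>finite F\<close>])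
    show "prefix_free F"
      using prefix_free_pos_exc that(2) unfolding prefix_free_def by blast
    show "\<forall>xs\<in>F. xs \<noteq> [] \<and> hd xs = 0 \<and> unit_steps xs \<and> length xs \<le> Max (length ` F)"
      using that pos_excD by auto
  qed
  then show "bdd_above (sum (path_prob p) ` {F. F \<subseteq> {xs. pos_exc xs} \<and> finite F})"
    by (intro bdd_aboveI2[of _ _ 1]) blast
qed

lemma infsum_path_prob_pos_exc_pos:
  assumes "\<forall>k. 0 < p k \<and> p k < 1"
  shows "0 < infsum (path_prob p) {xs. pos_exc xs}"
proof -
  have p01: "\<forall>k. 0 \<le> p k \<and> p k \<le> 1" using assms by (simp add: less_imp_le)
  have "pos_exc [0, 1, 0]" unfolding pos_exc_def by (auto simp: less_Suc_eq nth_Cons')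
  then have "infsum (path_prob p) {[0, 1, 0]} \<le> infsum (path_prob p) {xs. pos_exc xs}"
    using summable_on_path_prob_pos_exc[OF p01] path_prob_nonneg[OF p01]
    by (intro infsum_mono_neutral) auto
  moreover have "0 < path_prob p [0, 1, 0]" using assms by (simp add: path_prob_Cons_Cons)
  ultimately show ?thesis by simp
qed

lemma level_num_0_pos_exc:
  assumes "pos_exc xs"
  shows "level_num xs 0 = 1"
proof -
  have len: "2 \<le> length xs" and x0: "xs ! 0 = 0"
    using assms unfolding pos_exc_def by simp_all
  have "{n. n < length xs - 1 \<and> xs ! Suc n - xs ! n = 1 \<and> xs ! n = int 0} = {0}"
  proof (intro equalityI subsetI)
    fix n assume n: "n \<in> {n. n < length xs - 1 \<and> xs ! Suc n - xs ! n = 1 \<and> xs ! n = int 0}"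
    have "\<not> (0 < n \<and> n < length xs - 1 \<and> xs ! n = 0)"
      using assms unfolding pos_exc_def by (metis less_irrefl)
    with n show "n \<in> {0}" by auto
  next
    fix n assume "n \<in> {0 :: nat}"
    have "xs ! 1 - xs ! 0 = 1 \<or> xs ! 1 - xs ! 0 = -1"
      using assms len unfolding pos_exc_def by force
    moreover have "0 \<le> xs ! 1" using pos_excD(5)[OF assms] len by simp
    ultimately show "n \<in> {n. n < length xs - 1 \<and> xs ! Suc n - xs ! n = 1 \<and> xs ! n = int 0}"
      using \<open>n \<in> {0}\<close> len x0 by auto
  qed
  then show ?thesis by (simp add: level_num_def)
qed

lemma exponents_eq_if_prod_powers_eq:
  fixes c :: "nat \<Rightarrow> real" and N N' :: "nat \<Rightarrow> nat"
  assumes pos: "\<forall>h. 0 < c h"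
    and indep: "\<not> (\<exists>(K :: nat set) (a :: nat \<Rightarrow> int). finite K \<and> K \<noteq> {} \<and> 0 \<notin> K
                \<and> (\<forall>h\<in>K. a h \<noteq> 0) \<and> (\<Sum>h\<in>K. real_of_int (a h) * ln (c h)) = 0)"
    and eq: "(\<Prod>h<M. c h ^ N h) = (\<Prod>h<M. c h ^ N' h)" and "N 0 = N' 0" and "h < M"
  shows "N h = N' h"
proof -
  define K where "K = {h. h < M \<and> N h \<noteq> N' h}"
  define a where "a h = int (N h) - int (N' h)" for h
  have "c i \<noteq> 0" for i using pos[rule_format, of i] by simp
  then have ln_prod_powers: "ln (\<Prod>h<M. c h ^ N h) = (\<Sum>h<M. real (N h) * ln (c h))" for N
    by (subst ln_prod) (auto simp: ln_realpow pos)
  have "(\<Sum>h\<in>K. real_of_int (a h) * ln (c h)) = (\<Sum>h<M. real_of_int (a h) * ln (c h))"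
    by (rule sum.mono_neutral_left) (auto simp: K_def a_def)
  also have "\<dots> = ln (\<Prod>h<M. c h ^ N h) - ln (\<Prod>h<M. c h ^ N' h)"
    by (simp add: ln_prod_powers a_def left_diff_distrib sum_subtractf)
  also have "\<dots> = 0" using eq by simp
  finally have "(\<Sum>h\<in>K. real_of_int (a h) * ln (c h)) = 0" .
  moreover have "finite K" "0 \<notin> K" "\<forall>h\<in>K. a h \<noteq> 0"
    using \<open>N 0 = N' 0\<close> by (auto simp: K_def a_def)
  ultimately have "K = {}" using indep by blast
  with \<open>h < M\<close> show ?thesis by (auto simp: K_def)
qed

lemma ex_nat_bound_finite_int_set:
  assumes "finite (A :: int set)"
  shows "\<exists>M. \<forall>y\<in>A. y < int M"
proof -
  have "y < int (Suc (nat (Max A)))" if "y \<in> A" for y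
  proof -
    have "y \<le> Max A" using assms that by (rule Max_ge)
    then show ?thesis by linarith
  qed
  then show ?thesis by blast
qed

lemma path_prob_eq_if_level_nums_eq:
  assumes "pos_exc x" "pos_exc x'" "level_nums x = level_nums x'"
  shows "path_prob p x = path_prob p x'"
proof -
  obtain M where "\<forall>y\<in>set x. y < int M" "\<forall>y\<in>set x'. y < int M"
    using ex_nat_bound_finite_int_set[of "set x \<union> set x'"] by auto
  then show ?thesis
    using assms path_prob_pos_exc[of x M p] path_prob_pos_exc[of x' M p]
    by (simp add: level_nums_def)
qed

lemma level_nums_eq_if_path_prob_eq:
  assumes p: "\<forall>k. 0 < p k \<and> p k < 1"
    and indep: "\<not> (\<exists>(K :: nat set) (a :: nat \<Rightarrow> int). finite K \<and> K \<noteq> {} \<and> 0 \<notin> K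
                \<and> (\<forall>h\<in>K. a h \<noteq> 0)
                \<and> (\<Sum>h\<in>K. real_of_int (a h) * ln (p (int h) * (1 - p (int h + 1)))) = 0)"
    and exc: "pos_exc x" "pos_exc x'" and eq: "path_prob p x = path_prob p x'"
  shows "level_nums x = level_nums x'"
proof -
  let ?c = "\<lambda>h. p (int h) * (1 - p (int h + 1))"
  obtain M where M: "\<forall>y\<in>set x. y < int M" "\<forall>y\<in>set x'. y < int M"
    using ex_nat_bound_finite_int_set[of "set x \<union> set x'"] by auto
  have "(\<Prod>h<M. ?c h ^ level_num x h) = (\<Prod>h<M. ?c h ^ level_num x' h)"
    using eq exc M path_prob_pos_exc[of x M p] path_prob_pos_exc[of x' M p] by simp
  moreover have "\<forall>h. 0 < ?c h" using p by simp
  moreover have "level_num x 0 = level_num x' 0" using exc by (simp add: level_num_0_pos_exc)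
  ultimately have "level_num x h = level_num x' h" if "h < M" for h
    using exponents_eq_if_prod_powers_eq[OF _ indep] that by blast
  moreover have "level_num x h = level_num x' h" if "\<not> h < M" for h
  proof -
    have "int h \<notin> set x" "int h \<notin> set x'" using that M by auto
    then show ?thesis by (simp add: level_num_eq_ups ups_eq_0)
  qed
  ultimately show ?thesis
    unfolding level_nums_def by (meson ext)
qed

theorem proposition1:
  fixes p :: "int \<Rightarrow> real"
  assumes "\<forall>k. 0 < p k \<and> p k < 1"
  shows "(\<forall>x x'. pos_exc x \<and> pos_exc x' \<and> level_nums x = level_nums x'
            \<longrightarrow> cond_exc_prob p x = cond_exc_prob p x')
       \<and> ((\<not> (\<exists>(K :: nat set) (a :: nat \<Rightarrow> int). finite K \<and> K \<noteq> {} \<and> 0 \<notin> K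
                \<and> (\<forall>h\<in>K. a h \<noteq> 0)
                \<and> (\<Sum>h\<in>K. real_of_int (a h) * ln (p (int h) * (1 - p (int h + 1)))) = 0))
          \<longrightarrow> (\<forall>x x'. pos_exc x \<and> pos_exc x' \<and> cond_exc_prob p x = cond_exc_prob p x'
                 \<longrightarrow> level_nums x = level_nums x'))"
proof (intro conjI allI impI)
  fix x x'
  assume "pos_exc x \<and> pos_exc x' \<and> level_nums x = level_nums x'"
  then show "cond_exc_prob p x = cond_exc_prob p x'"
    by (simp add: cond_exc_prob_def path_prob_eq_if_level_nums_eq)
next
  fix x x'
  assume indep: "\<not> (\<exists>(K :: nat set) (a :: nat \<Rightarrow> int). finite K \<and> K \<noteq> {} \<and> 0 \<notin> K
                \<and> (\<forall>h\<in>K. a h \<noteq> 0)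
                \<and> (\<Sum>h\<in>K. real_of_int (a h) * ln (p (int h) * (1 - p (int h + 1)))) = 0)"
    and "pos_exc x \<and> pos_exc x' \<and> cond_exc_prob p x = cond_exc_prob p x'"
  moreover have "0 < infsum (path_prob p) {xs. pos_exc xs}"
    using assms by (rule infsum_path_prob_pos_exc_pos)
  ultimately show "level_nums x = level_nums x'"
    by (intro level_nums_eq_if_path_prob_eq[OF assms indep]) (simp_all add: cond_exc_prob_def)
qed

end
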